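(* Let $G=\langle S_k\mid K\rangle$ be a finitely generated semigroup as described in the context, $\mathcal{A}$ a finite alphabet and $X\subseteq\mathcal{A}^G$ a tree shift. If $K$ is primitive, then for every $1\le i\le k$ the limit $\lim_{n\to\infty}\log p^{(s_i)}_n/|\bar{\Delta}^{(s_i)}_n|$ exists and \[\lim_{n\to\infty}\frac{\log p^{(s_i)}_n}{|\bar{\Delta}^{(s_i)}_n|}=\inf_{n\ge0}\max_{1\le j\le k}\frac{\log p^{(s_j)}_n}{|\bar{\Delta}^{(s_j)}_n|}.\]
   Context: Let $K$ be a $k\times k$ matrix with entries in $\{0,1\}$ indexed by $S_k=\{s_1,\dots,s_k\}$, and let $G=\langle S_k\mid K\rangle$ be the semigroup generated by $S_k$ subject to the relations $s_is_j=1_G$ if and only if $K(s_i,s_j)=0$ ($1_G$ the identity). Every $g\in G$ has a unique minimal representation $g=g_1g_2\cdots g_n$ with $g_l\in S_k$ and $K(g_l,g_{l+1})=1$; its length is $|g|=n$ (with $|1_G|=0$). For $g\in G$ and $n\ge0$ the $n$-semiball at $g$ is $\bar{\Delta}^{(g)}_n=\{gh: h\in G,\ |h|\le n,\ |gh|=|g|+|h|\}$. For a finite alphabet $\mathcal{A}$, a pattern is a map $u:H\to\mathcal{A}$ with $H\subset G$ finite; $u$ is accepted by $t\in\mathcal{A}^G$ if there is $g\in G$ with $t_{gh}=u_h$ for all $h\in H$. A tree shift is a subset $X\subseteq\mathcal{A}^G$ consisting of all $t$ that accept no pattern from some fixed set $\mathcal{F}$ of patterns. $p^{(g)}_n$ denotes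 the number of patterns $u\in\mathcal{A}^{\bar{\Delta}^{(g)}_n}$ accepted by some $t\in X$. A nonnegative square matrix is primitive if some power of it has all entries positive. *)

theory Defs
  imports Complex_Main "HOL-Library.FuncSet"
begin

text \<open>Generators s_1..s_k are encoded as 0..<k; K is a k x k matrix with entries in {0,1},
  encoded as a function on indices. Elements of G are represented by their (unique) minimal
  representation: admissible words over {0..<k}; the empty word is the identity.\<close>

definition Gset :: "(nat \<Rightarrow> nat \<Rightarrow> nat) \<Rightarrow> nat \<Rightarrow> nat list set" where
  "Gset K k = {w. set w \<subseteq> {..<k} \<and> (\<forall>l. Suc l < length w \<longrightarrow> K (w ! l) (w ! Suc l) = 1)}"

text \<open>Product in G: append letters of h one by one, cancelling s_i s_j = 1 whenever K(s_i,s_j)=0.\<close>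
fun gmul :: "(nat \<Rightarrow> nat \<Rightarrow> nat) \<Rightarrow> nat list \<Rightarrow> nat list \<Rightarrow> nat list" where
  "gmul K g [] = g"
| "gmul K g (a # h) =
     (if g \<noteq> [] \<and> K (last g) a = 0 then gmul K (butlast g) h else gmul K (g @ [a]) h)"

definition semiball :: "(nat \<Rightarrow> nat \<Rightarrow> nat) \<Rightarrow> nat \<Rightarrow> nat list \<Rightarrow> nat \<Rightarrow> nat list set" where
  "semiball K k g n = {gmul K g h | h. h \<in> Gset K k \<and> length h \<le> n
                          \<and> length (gmul K g h) = length g + length h}"

definition accepts :: "(nat \<Rightarrow> nat \<Rightarrow> nat) \<Rightarrow> nat \<Rightarrow> (nat list \<Rightarrow> 'a) \<Rightarrow> nat list set \<Rightarrow> (nat list \<Rightarrow> 'a) \<Rightarrow> bool" where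
  "accepts K k t H u \<longleftrightarrow> (\<exists>g\<in>Gset K k. \<forall>h\<in>H. t (gmul K g h) = u h)"

definition is_pattern :: "(nat \<Rightarrow> nat \<Rightarrow> nat) \<Rightarrow> nat \<Rightarrow> nat list set \<times> (nat list \<Rightarrow> 'a) \<Rightarrow> bool" where
  "is_pattern K k p \<longleftrightarrow> finite (fst p) \<and> fst p \<subseteq> Gset K k \<and> snd p \<in> fst p \<rightarrow>\<^sub>E UNIV"

definition tree_shift :: "(nat \<Rightarrow> nat \<Rightarrow> nat) \<Rightarrow> nat \<Rightarrow> (nat list set \<times> (nat list \<Rightarrow> 'a)) set
      \<Rightarrow> (nat list \<Rightarrow> 'a) set" where
  "tree_shift K k F = {t \<in> Gset K k \<rightarrow>\<^sub>E UNIV. \<forall>p\<in>F. \<not> accepts K k t (fst p) (snd p)}"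

definition is_tree_shift :: "(nat \<Rightarrow> nat \<Rightarrow> nat) \<Rightarrow> nat \<Rightarrow> (nat list \<Rightarrow> 'a) set \<Rightarrow> bool" where
  "is_tree_shift K k X \<longleftrightarrow> (\<exists>F. (\<forall>p\<in>F. is_pattern K k p) \<and> X = tree_shift K k F)"

definition pcount :: "(nat \<Rightarrow> nat \<Rightarrow> nat) \<Rightarrow> nat \<Rightarrow> (nat list \<Rightarrow> 'a::finite) set \<Rightarrow> nat list \<Rightarrow> nat \<Rightarrow> nat" where
  "pcount K k X g n = card {u \<in> semiball K k g n \<rightarrow>\<^sub>E (UNIV :: 'a set).
                              \<exists>t\<in>X. accepts K k t (semiball K k g n) u}"

fun matpow :: "nat \<Rightarrow> (nat \<Rightarrow> nat \<Rightarrow> nat) \<Rightarrow> nat \<Rightarrow> nat \<Rightarrow> nat \<Rightarrow> nat" where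
  "matpow k M 0 = (\<lambda>i j. if i = j then 1 else 0)"
| "matpow k M (Suc m) = (\<lambda>i j. \<Sum>l<k. matpow k M m i l * M l j)"

definition primitive :: "nat \<Rightarrow> (nat \<Rightarrow> nat \<Rightarrow> nat) \<Rightarrow> bool" where
  "primitive k M \<longleftrightarrow> (\<exists>m\<ge>1. \<forall>i<k. \<forall>j<k. matpow k M m i j > 0)"

end

theory Submission
  imports Defs
begin

(* The semiball at s_i is the cone of admissible words that start with i and have at most n + 1
   letters.  Cutting a cone of radius m + 1 + n after m + 1 steps splits it into the cone of
   radius m and one translated cone of radius n at the end point of each admissible path of
   m + 1 steps; there are (K^(m+1))_ij such paths from i to j.  So the cone sizes D_i are additive
   and, since an accepted pattern is determined by its accepted restrictions to the pieces, the
   logarithms L_i of the pattern counts are subadditive along these splittings.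

   Splitting repeatedly into cones of a fixed radius T bounds every L_i(n)/D_i(n) asymptotically
   by max_j L_j(T)/D_j(T), so the limsup is at most the infimum h.  Conversely, by primitivity
   every cone of radius m + 1 + n contains a translate of every cone of radius n, and all these
   cones have comparable sizes.  If L_i(n)/D_i(n) <= h - eps for some large n, this deficit is
   inherited by every cone of radius m + 1 + n, pushing all ratios at that radius below h, which
   contradicts h <= max_j L_j/D_j. *)

section \<open>Admissible words and cones\<close>

lemma Gset_iff_successively:
  "w \<in> Gset K k \<longleftrightarrow> set w \<subseteq> {..<k} \<and> successively (\<lambda>a b. K a b = 1) w"
  by (simp add: Gset_def successively_conv_nth)

lemma Gset_Nil [simp]: "[] \<in> Gset K k"
  by (simp add: Gset_def)

lemma Gset_Cons: "a # w \<in> Gset K k \<longleftrightarrow> a < k \<and> w \<in> Gset K k \<and> (w \<noteq> [] \<longrightarrow> K a (hd w) = 1)"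
  by (auto simp: Gset_iff_successively successively_Cons)

lemma Gset_append: "u @ v \<in> Gset K k \<longleftrightarrow> u \<in> Gset K k \<and> v \<in> Gset K k \<and>
    (u \<noteq> [] \<longrightarrow> v \<noteq> [] \<longrightarrow> K (last u) (hd v) = 1)"
  by (auto simp: Gset_iff_successively successively_append_iff)

lemma Gset_butlast: "w \<in> Gset K k \<Longrightarrow> butlast w \<in> Gset K k"
  by (metis Gset_append append_butlast_last_id butlast.simps(1))

lemma Gset_take: "w \<in> Gset K k \<Longrightarrow> take n w \<in> Gset K k"
  by (metis Gset_append append_take_drop_id)

lemma Gset_drop: "w \<in> Gset K k \<Longrightarrow> drop n w \<in> Gset K k"
  by (metis Gset_append append_take_drop_id)

lemma last_Gset_less: "w \<in> Gset K k \<Longrightarrow> w \<noteq> [] \<Longrightarrow> last w < k"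
  unfolding Gset_def using last_in_set by blast

lemma gmul_append: "gmul K g (h1 @ h2) = gmul K (gmul K g h1) h2"
  by (induction h1 arbitrary: g) auto

lemma gmul_eq_append:
  assumes "h \<in> Gset K k" and "g = [] \<or> h = [] \<or> K (last g) (hd h) \<noteq> 0"
  shows "gmul K g h = g @ h"
  using assms
proof (induction h arbitrary: g)
  case (Cons a h)
  then have "gmul K (g @ [a]) h = (g @ [a]) @ h"
    by (intro Cons.IH) (auto simp: Gset_Cons)
  with Cons.prems show ?case by auto
qed simp

lemma length_gmul_le: "length (gmul K g h) \<le> length g + length h"
proof (induction h arbitrary: g)
  case (Cons a h)
  show ?case using Cons.IH[of "butlast g"] Cons.IH[of "g @ [a]"] by auto
qed simp

lemma gmul_Gset:
  assumes K01: "\<forall>i<k. \<forall>j<k. K i j \<in> {0, 1}"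
  shows "g \<in> Gset K k \<Longrightarrow> h \<in> Gset K k \<Longrightarrow> gmul K g h \<in> Gset K k"
proof (induction h arbitrary: g)
  case (Cons a h)
  show ?case
  proof (cases "g \<noteq> [] \<and> K (last g) a = 0")
    case True
    with Cons show ?thesis by (auto simp: Gset_Cons Gset_butlast)
  next
    case False
    have a: "a < k" and h: "h \<in> Gset K k"
      using Cons.prems(2) by (simp_all add: Gset_Cons)
    have "K (last g) a = 1" if "g \<noteq> []"
    proof -
      have "K (last g) a \<in> {0, 1}"
        using K01 last_Gset_less[OF Cons.prems(1) that] a by blast
      with False that show ?thesis by blast
    qed
    then have "g @ [a] \<in> Gset K k"
      using Cons.prems(1) a by (simp add: Gset_append Gset_Cons)
    moreover have "gmul K g (a # h) = gmul K (g @ [a]) h"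
      using False by auto
    ultimately show ?thesis
      using Cons.IH h by simp
  qed
qed simp

definition cone :: "(nat \<Rightarrow> nat \<Rightarrow> nat) \<Rightarrow> nat \<Rightarrow> nat \<Rightarrow> nat \<Rightarrow> nat list set" where
  "cone K k i n = {w \<in> Gset K k. w \<noteq> [] \<and> hd w = i \<and> length w \<le> Suc n}"

definition paths :: "(nat \<Rightarrow> nat \<Rightarrow> nat) \<Rightarrow> nat \<Rightarrow> nat \<Rightarrow> nat \<Rightarrow> nat list set" where
  "paths K k i m = {w \<in> Gset K k. w \<noteq> [] \<and> hd w = i \<and> length w = Suc m}"

lemma semiball_singleton:
  assumes K01: "\<forall>i<k. \<forall>j<k. K i j \<in> {0, 1}" and i: "i < k"
  shows "semiball K k [i] n = cone K k i n"
proof (intro equalityI subsetI)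
  fix w assume "w \<in> semiball K k [i] n"
  then obtain h where h: "h \<in> Gset K k" "length h \<le> n" "length (gmul K [i] h) = Suc (length h)"
    and w: "w = gmul K [i] h" by (auto simp: semiball_def)
  have "h = [] \<or> K i (hd h) \<noteq> 0"
  proof (rule ccontr)
    assume "\<not> ?thesis"
    then obtain a h' where "h = a # h'" "K i a = 0" by (cases h) auto
    then show False using h(3) length_gmul_le[of K "[]" h'] by simp
  qed
  moreover have "h \<noteq> [] \<Longrightarrow> K i (hd h) \<in> {0, 1}"
    using K01 i h(1) by (cases h) (simp_all add: Gset_Cons)
  ultimately have "h = [] \<or> K i (hd h) = 1"
    by fastforce
  then show "w \<in> cone K k i n"
    using gmul_eq_append[OF h(1), of "[i]"] h i w by (auto simp: cone_def Gset_Cons)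
next
  fix w assume "w \<in> cone K k i n"
  then obtain h where w: "w = i # h" and "i # h \<in> Gset K k" and "length h \<le> n"
    by (cases w) (auto simp: cone_def)
  moreover from this have "h \<in> Gset K k" "h = [] \<or> K i (hd h) \<noteq> 0"
    by (auto simp: Gset_Cons)
  moreover from this have "gmul K [i] h = i # h"
    using gmul_eq_append[of h K k "[i]"] by auto
  ultimately show "w \<in> semiball K k [i] n"
    unfolding semiball_def by force
qed

lemma finite_cone: "finite (cone K k i n)"
proof (rule finite_subset)
  show "cone K k i n \<subseteq> {w. set w \<subseteq> {..<k} \<and> length w \<le> Suc n}"
    by (auto simp: cone_def Gset_def)
qed (rule finite_lists_length_le[OF finite_lessThan])

lemma finite_paths: "finite (paths K k i m)"
proof (rule finite_subset)
  show "paths K k i m \<subseteq> {w. set w \<subseteq> {..<k} \<and> length w = Suc m}"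
    by (auto simp: paths_def Gset_def)
qed (rule finite_lists_length_eq[OF finite_lessThan])

lemma singleton_in_cone: "i < k \<Longrightarrow> [i] \<in> cone K k i n"
  by (simp add: cone_def Gset_Cons)

lemma cone_mono: "m \<le> n \<Longrightarrow> cone K k i m \<subseteq> cone K k i n"
  by (auto simp: cone_def)

lemma mem_cone_iff:
  "x \<in> cone K k j n \<longleftrightarrow> (\<exists>y. x = j # y \<and> j # y \<in> Gset K k \<and> length y \<le> n)"
  by (cases x) (auto simp: cone_def)

lemma butlast_append_last_Cons: "w \<noteq> [] \<Longrightarrow> butlast w @ last w # y = w @ y"
  by (induction w) auto

text \<open>The two pieces overlap in the end point of the path, hence the \<open>butlast\<close>.\<close>
lemma bij_betw_cone_split:
  "bij_betw (\<lambda>(w, x). butlast w @ x) (SIGMA w:paths K k i (Suc m). cone K k (last w) n)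
     (cone K k i (Suc m + n) - cone K k i m)"
  unfolding bij_betw_def
proof
  show "inj_on (\<lambda>(w, x). butlast w @ x) (SIGMA w:paths K k i (Suc m). cone K k (last w) n)"
  proof (rule inj_onI, clarify)
    fix w x w' x'
    assume w: "w \<in> paths K k i (Suc m)" and x: "x \<in> cone K k (last w) n"
      and w': "w' \<in> paths K k i (Suc m)" and x': "x' \<in> cone K k (last w') n"
      and eq: "butlast w @ x = butlast w' @ x'"
    obtain y y' where y: "x = last w # y" and y': "x' = last w' # y'"
      using x x' by (auto simp: mem_cone_iff)
    have "w \<noteq> []" "w' \<noteq> []" and len: "length w = length w'"
      using w w' by (simp_all add: paths_def)
    with eq have "w @ y = w' @ y'"
      by (simp add: y y' butlast_append_last_Cons)
    with len have "w = w'" and "y = y'"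
      by simp_all
    with y y' show "w = w' \<and> x = x'"
      by simp
  qed
  show "(\<lambda>(w, x). butlast w @ x) ` (SIGMA w:paths K k i (Suc m). cone K k (last w) n)
      = cone K k i (Suc m + n) - cone K k i m"
  proof (intro equalityI subsetI)
    fix v assume "v \<in> (\<lambda>(w, x). butlast w @ x) ` (SIGMA w:paths K k i (Suc m). cone K k (last w) n)"
    then obtain w y where w: "w \<in> paths K k i (Suc m)" and y: "last w # y \<in> Gset K k" "length y \<le> n"
      and v: "v = butlast w @ last w # y"
      by (auto simp: mem_cone_iff)
    have "w \<in> Gset K k" "w \<noteq> []" "hd w = i" "length w = Suc (Suc m)"
      using w by (simp_all add: paths_def)
    moreover have "y \<in> Gset K k" "y \<noteq> [] \<longrightarrow> K (last w) (hd y) = 1"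
      using y(1) by (simp_all add: Gset_Cons)
    ultimately have "w @ y \<in> Gset K k" "w @ y \<noteq> []" "hd (w @ y) = i"
      "length (w @ y) \<le> Suc (Suc m + n)" "\<not> length (w @ y) \<le> Suc m"
      using y(2) by (simp_all add: Gset_append)
    then show "v \<in> cone K k i (Suc m + n) - cone K k i m"
      by (simp add: v butlast_append_last_Cons \<open>w \<noteq> []\<close> cone_def)
  next
    fix v assume v: "v \<in> cone K k i (Suc m + n) - cone K k i m"
    define w where "w = take (Suc (Suc m)) v"
    have len: "Suc m < length v" and vG: "v \<in> Gset K k" and "hd v = i"
      using v by (auto simp: cone_def)
    then have w: "w \<in> paths K k i (Suc m)"
      by (auto simp: w_def paths_def Gset_take hd_take)
    have "last w = v ! Suc m"
      using len by (simp add: w_def take_Suc_conv_app_nth)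
    then have "drop (Suc m) v \<in> cone K k (last w) n"
      using v len vG by (auto simp: cone_def Gset_drop hd_drop_conv_nth)
    moreover have "butlast w @ drop (Suc m) v = v"
      using len by (simp add: w_def butlast_take)
    ultimately show "v \<in> (\<lambda>(w, x). butlast w @ x) ` (SIGMA w:paths K k i (Suc m). cone K k (last w) n)"
      using w by (intro rev_image_eqI[of "(w, drop (Suc m) v)"]) auto
  qed
qed

lemma card_cone_split:
  "card (cone K k i (Suc m + n)) = card (cone K k i m) + (\<Sum>w\<in>paths K k i (Suc m). card (cone K k (last w) n))"
proof -
  have "card (cone K k i (Suc m + n)) = card (cone K k i m) + card (cone K k i (Suc m + n) - cone K k i m)"
    using cone_mono[of m "Suc m + n"] finite_cone by (simp add: card_Diff_subset card_mono)
  also have "card (cone K k i (Suc m + n) - cone K k i m)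
      = card (SIGMA w:paths K k i (Suc m). cone K k (last w) n)"
    by (rule bij_betw_same_card[OF bij_betw_cone_split, symmetric])
  also have "\<dots> = (\<Sum>w\<in>paths K k i (Suc m). card (cone K k (last w) n))"
    by (simp add: finite_paths finite_cone)
  finally show ?thesis .
qed

lemma card_paths_last:
  assumes K01: "\<forall>i<k. \<forall>j<k. K i j \<in> {0, 1}" and i: "i < k" and j: "j < k"
  shows "card {w \<in> paths K k i m. last w = j} = matpow k K m i j"
  using j
proof (induction m arbitrary: j)
  case 0
  have "{w \<in> paths K k i 0. last w = j} = (if i = j then {[i]} else {})"
    using i by (auto simp: paths_def Gset_Cons length_Suc_conv)
  then show ?case by simp
next
  case (Suc m)
  let ?P = "\<lambda>l. {w \<in> paths K k i m. last w = l}"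
  have split: "{w \<in> paths K k i (Suc m). last w = j}
      = (\<Union>l\<in>{l. l < k \<and> K l j = 1}. (\<lambda>w. w @ [j]) ` ?P l)"
  proof (intro equalityI subsetI)
    fix v assume v: "v \<in> {w \<in> paths K k i (Suc m). last w = j}"
    then obtain u where vu: "v = u @ [j]" and u: "u \<noteq> []"
      by (cases v rule: rev_cases) (fastforce simp: paths_def)+
    with v have "u \<in> ?P (last u)" and "K (last u) j = 1" and "last u < k"
      by (auto simp: paths_def Gset_append last_Gset_less)
    with vu show "v \<in> (\<Union>l\<in>{l. l < k \<and> K l j = 1}. (\<lambda>w. w @ [j]) ` ?P l)"
      by blast
  next
    fix v assume "v \<in> (\<Union>l\<in>{l. l < k \<and> K l j = 1}. (\<lambda>w. w @ [j]) ` ?P l)"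
    with Suc.prems show "v \<in> {w \<in> paths K k i (Suc m). last w = j}"
      by (auto simp: paths_def Gset_append Gset_Cons)
  qed
  have "card {w \<in> paths K k i (Suc m). last w = j} = (\<Sum>l | l < k \<and> K l j = 1. card (?P l))"
    unfolding split by (subst card_UN_disjoint) (auto simp: card_image inj_on_def finite_paths)
  also have "\<dots> = (\<Sum>l | l < k \<and> K l j = 1. matpow k K m i l)"
    using Suc.IH by simp
  also have "\<dots> = (\<Sum>l<k. matpow k K m i l * K l j)"
  proof -
    have "(\<Sum>l<k. matpow k K m i l * K l j) = (\<Sum>l | l < k \<and> K l j = 1. matpow k K m i l * K l j)"
      using K01 Suc.prems by (intro sum.mono_neutral_right) fastforce+
    then show ?thesis by simp
  qed
  finally show ?case by simp
qed

lemma sum_paths_last: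
  fixes f :: "nat \<Rightarrow> 'b::comm_semiring_1"
  assumes K01: "\<forall>i<k. \<forall>j<k. K i j \<in> {0, 1}" and i: "i < k"
  shows "(\<Sum>w\<in>paths K k i m. f (last w)) = (\<Sum>j<k. of_nat (matpow k K m i j) * f j)"
proof -
  have "(\<Sum>w\<in>paths K k i m. f (last w)) = (\<Sum>j<k. \<Sum>w\<in>{w \<in> paths K k i m. last w = j}. f (last w))"
    by (rule sum.group[symmetric, OF finite_paths finite_lessThan]) (auto simp: paths_def last_Gset_less)
  also have "\<dots> = (\<Sum>j<k. of_nat (matpow k K m i j) * f j)"
    using card_paths_last[OF K01 i] by (intro sum.cong) auto
  finally show ?thesis .
qed

section \<open>Accepted patterns\<close>

definition accepted_patterns ::
    "(nat \<Rightarrow> nat \<Rightarrow> nat) \<Rightarrow> nat \<Rightarrow> (nat list \<Rightarrow> 'a) set \<Rightarrow> nat list set \<Rightarrow> (nat list \<Rightarrow> 'a) set" where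
  "accepted_patterns K k X H = {u \<in> H \<rightarrow>\<^sub>E UNIV. \<exists>t\<in>X. accepts K k t H u}"

lemma pcount_eq_card_accepted_patterns:
  "pcount K k X g n = card (accepted_patterns K k X (semiball K k g n))"
  by (simp add: pcount_def accepted_patterns_def)

lemma finite_accepted_patterns:
  "finite H \<Longrightarrow> finite (accepted_patterns K k (X :: (nat list \<Rightarrow> 'a::finite) set) H)"
  unfolding accepted_patterns_def by (rule finite_subset[OF _ finite_PiE[of H "\<lambda>_. UNIV"]]) auto

lemma accepted_patterns_shift:
  assumes K01: "\<forall>i<k. \<forall>j<k. K i j \<in> {0, 1}"
    and u: "u \<in> accepted_patterns K k X H" and p: "p \<in> Gset K k" and B: "\<And>x. x \<in> B \<Longrightarrow> p @ x \<in> H"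
  shows "(\<lambda>x\<in>B. u (p @ x)) \<in> accepted_patterns K k X B"
proof -
  obtain t g where "t \<in> X" and g: "g \<in> Gset K k" and tu: "\<And>h. h \<in> H \<Longrightarrow> t (gmul K g h) = u h"
    using u unfolding accepted_patterns_def accepts_def by blast
  have "\<forall>x\<in>B. t (gmul K (gmul K g p) x) = (\<lambda>x\<in>B. u (p @ x)) x"
    using tu B by (simp add: gmul_append[symmetric])
  with gmul_Gset[OF K01 g p] have "accepts K k t B (\<lambda>x\<in>B. u (p @ x))"
    unfolding accepts_def by blast
  with \<open>t \<in> X\<close> show ?thesis
    unfolding accepted_patterns_def by auto
qed

text \<open>An accepted pattern on the large cone is determined by its restrictions to the small cone
  and to the translated cones of \<open>bij_betw_cone_split\<close>, each of which is again accepted.\<close>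
lemma card_accepted_patterns_cone_split:
  fixes X :: "(nat list \<Rightarrow> 'a::finite) set"
  assumes K01: "\<forall>i<k. \<forall>j<k. K i j \<in> {0, 1}"
  shows "card (accepted_patterns K k X (cone K k i (Suc m + n)))
    \<le> card (accepted_patterns K k X (cone K k i m)) *
       (\<Prod>w\<in>paths K k i (Suc m). card (accepted_patterns K k X (cone K k (last w) n)))"
proof -
  let ?pat = "accepted_patterns K k X"
  let ?H = "cone K k i (Suc m + n)" and ?P = "paths K k i (Suc m)"
  let ?T = "?pat (cone K k i m) \<times> (\<Pi>\<^sub>E w\<in>?P. ?pat (cone K k (last w) n))"
  define f where "f u = (restrict u (cone K k i m), \<lambda>w\<in>?P. \<lambda>x\<in>cone K k (last w) n. u (butlast w @ x))"
    for u :: "nat list \<Rightarrow> 'a"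
  have split: "(\<lambda>(w, x). butlast w @ x) ` (SIGMA w:?P. cone K k (last w) n) = ?H - cone K k i m"
    by (rule bij_betw_imp_surj_on[OF bij_betw_cone_split])
  have pieces: "butlast w @ x \<in> ?H" if "w \<in> ?P" "x \<in> cone K k (last w) n" for w x
  proof -
    have "butlast w @ x \<in> (\<lambda>(w, x). butlast w @ x) ` (SIGMA w:?P. cone K k (last w) n)"
      using that by (intro image_eqI[where x = "(w, x)"]) simp_all
    then show ?thesis
      unfolding split by (rule DiffD1)
  qed
  have inj: "inj_on f (?pat ?H)"
  proof (rule inj_onI)
    fix u u' assume u: "u \<in> ?pat ?H" and u': "u' \<in> ?pat ?H" and eq: "f u = f u'"
    have small: "restrict u (cone K k i m) = restrict u' (cone K k i m)"
      and large: "(\<lambda>w\<in>?P. \<lambda>x\<in>cone K k (last w) n. u (butlast w @ x))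
        = (\<lambda>w\<in>?P. \<lambda>x\<in>cone K k (last w) n. u' (butlast w @ x))"
      using eq unfolding f_def prod.inject by (rule conjunct1, rule conjunct2)
    show "u = u'"
    proof (rule PiE_ext)
      show "u \<in> ?H \<rightarrow>\<^sub>E UNIV" "u' \<in> ?H \<rightarrow>\<^sub>E UNIV"
        using u u' unfolding accepted_patterns_def by simp_all
      fix v assume v: "v \<in> ?H"
      show "u v = u' v"
      proof (cases "v \<in> cone K k i m")
        case True
        then show ?thesis
          using fun_cong[OF small, of v] by simp
      next
        case False
        with v have "v \<in> (\<lambda>(w, x). butlast w @ x) ` (SIGMA w:?P. cone K k (last w) n)"
          unfolding split by (rule DiffI)
        then obtain w x where "w \<in> ?P" "x \<in> cone K k (last w) n" "v = butlast w @ x"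
          by (elim imageE SigmaE) simp
        then show ?thesis
          using fun_cong[OF fun_cong[OF large, of w], of x] by simp
      qed
    qed
  qed
  have "f u \<in> ?T" if u: "u \<in> ?pat ?H" for u
  proof -
    have "(\<lambda>x\<in>cone K k i m. u ([] @ x)) \<in> ?pat (cone K k i m)"
      by (rule accepted_patterns_shift[OF K01 u Gset_Nil]) (use cone_mono[of m "Suc m + n"] in auto)
    moreover have "(\<lambda>w\<in>?P. \<lambda>x\<in>cone K k (last w) n. u (butlast w @ x))
        \<in> (\<Pi>\<^sub>E w\<in>?P. ?pat (cone K k (last w) n))"
      unfolding restrict_PiE_iff
    proof
      fix w assume w: "w \<in> ?P"
      show "(\<lambda>x\<in>cone K k (last w) n. u (butlast w @ x)) \<in> ?pat (cone K k (last w) n)"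
        by (rule accepted_patterns_shift[OF K01 u]) (use w pieces in \<open>auto simp: paths_def Gset_butlast\<close>)
    qed
    ultimately show ?thesis
      by (simp add: f_def)
  qed
  then have "f ` ?pat ?H \<subseteq> ?T"
    by blast
  moreover have "finite ?T"
    by (simp add: finite_accepted_patterns finite_cone finite_paths finite_PiE)
  ultimately have "card (?pat ?H) \<le> card ?T"
    by (rule card_inj_on_le[OF inj])
  also have "card ?T = card (?pat (cone K k i m)) * (\<Prod>w\<in>?P. card (?pat (cone K k (last w) n)))"
    by (simp add: card_cartesian_product card_PiE finite_paths)
  finally show ?thesis .
qed

section \<open>Primitive cone systems\<close>

text \<open>Abstract form of the splitting identities: \<open>D i n\<close> and \<open>L i n\<close> stand for the size of the
  cone of radius \<open>n\<close> at \<open>i\<close> and the logarithm of its number of accepted patterns, and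
  \<open>A m\<close> for the \<open>Suc m\<close>-th power of \<open>K\<close>, which counts paths of \<open>Suc m\<close> steps.\<close>
locale cone_growth =
  fixes I :: "'i set" and A :: "nat \<Rightarrow> 'i \<Rightarrow> 'i \<Rightarrow> real" and D L :: "'i \<Rightarrow> nat \<Rightarrow> real"
  assumes finite_I: "finite I" and I_nonempty: "I \<noteq> {}"
    and A_nonneg: "i \<in> I \<Longrightarrow> j \<in> I \<Longrightarrow> 0 \<le> A m i j"
    and A_primitive: "\<exists>m. \<forall>i\<in>I. \<forall>j\<in>I. 1 \<le> A m i j"
    and D_ge_1: "i \<in> I \<Longrightarrow> 1 \<le> D i n"
    and L_nonneg: "i \<in> I \<Longrightarrow> 0 \<le> L i n"
    and D_split: "i \<in> I \<Longrightarrow> D i (Suc m + n) = D i m + (\<Sum>j\<in>I. A m i j * D j n)"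
    and L_split: "i \<in> I \<Longrightarrow> L i (Suc m + n) \<le> L i m + (\<Sum>j\<in>I. A m i j * L j n)"
begin

definition ratio :: "'i \<Rightarrow> nat \<Rightarrow> real" where
  "ratio i n = L i n / D i n"

definition max_ratio :: "nat \<Rightarrow> real" where
  "max_ratio n = Max ((\<lambda>j. ratio j n) ` I)"

definition entropy :: real where
  "entropy = (INF n. max_ratio n)"

lemma D_pos: "i \<in> I \<Longrightarrow> 0 < D i n"
  using D_ge_1[of i n] by linarith

lemma ratio_nonneg: "i \<in> I \<Longrightarrow> 0 \<le> ratio i n"
  unfolding ratio_def using L_nonneg D_pos by (simp add: less_imp_le)

lemma ratio_le_max_ratio: "i \<in> I \<Longrightarrow> ratio i n \<le> max_ratio n"
  unfolding max_ratio_def by (rule Max_ge) (use finite_I in auto)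

lemma max_ratio_nonneg: "0 \<le> max_ratio n"
  using I_nonempty ratio_nonneg ratio_le_max_ratio by (meson equals0I order_trans)

lemma bdd_below_max_ratio: "bdd_below (range max_ratio)"
  using max_ratio_nonneg by (intro bdd_belowI[of _ 0]) auto

lemma entropy_le_max_ratio: "entropy \<le> max_ratio n"
  unfolding entropy_def by (rule cINF_lower[OF bdd_below_max_ratio]) simp

lemma entropy_nonneg: "0 \<le> entropy"
  unfolding entropy_def by (rule cINF_greatest) (auto simp: max_ratio_nonneg)

lemma L_le_max_ratio: "i \<in> I \<Longrightarrow> L i n \<le> max_ratio n * D i n"
  using ratio_le_max_ratio[of i n] D_ge_1[of i n] by (simp add: ratio_def pos_divide_le_eq)

lemma D_step: "i \<in> I \<Longrightarrow> \<forall>j\<in>I. 1 \<le> A m i j \<Longrightarrow> D i n + 1 \<le> D i (Suc m + n)"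
proof -
  assume i: "i \<in> I" and Ai: "\<forall>j\<in>I. 1 \<le> A m i j"
  have "D i n \<le> A m i i * D i n"
    using Ai i D_ge_1[OF i, of n] by (simp add: mult_le_cancel_right1)
  also have "\<dots> \<le> (\<Sum>j\<in>I. A m i j * D j n)"
    using i finite_I by (intro member_le_sum) (auto intro!: mult_nonneg_nonneg A_nonneg less_imp_le[OF D_pos])
  finally show ?thesis
    using D_split[OF i, of m n] D_ge_1[OF i, of m] by linarith
qed

lemma D_tendsto_at_top: "i \<in> I \<Longrightarrow> filterlim (D i) at_top sequentially"
proof -
  assume i: "i \<in> I"
  obtain m where Am: "\<forall>i\<in>I. \<forall>j\<in>I. 1 \<le> A m i j"
    using A_primitive by blast
  have lin: "real n \<le> real (Suc m) * D i n" for n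
  proof (induction n rule: less_induct)
    case (less n)
    show ?case
    proof (cases "n < Suc m")
      case True
      then have "real n \<le> real (Suc m)"
        by simp
      also have "\<dots> \<le> real (Suc m) * D i n"
        using D_ge_1[OF i, of n] by (simp add: mult_le_cancel_left1)
      finally show ?thesis .
    next
      case False
      then obtain n' where n: "n = Suc m + n'"
        using le_Suc_ex[of "Suc m" n] by auto
      have "real n = real (Suc m) + real n'"
        by (simp add: n)
      also have "\<dots> \<le> real (Suc m) * (1 + D i n')"
        using less.IH[of n'] n by (simp add: algebra_simps)
      also have "\<dots> \<le> real (Suc m) * D i n"
        using D_step[OF i, of m n'] Am i n by (intro mult_left_mono) auto
      finally show ?thesis .
    qed
  qed
  have "filterlim (\<lambda>n. real n * (1 / real (Suc m))) at_top sequentially"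
    by (rule filterlim_at_top_mult_tendsto_pos[OF tendsto_const _ filterlim_real_sequentially]) simp
  then show ?thesis
    by (rule filterlim_at_top_mono) (use lin in \<open>simp add: pos_divide_le_eq mult.commute\<close>)
qed

text \<open>Split off cones of radius \<open>T\<close> until the remaining cone has radius at most \<open>T\<close>.\<close>
lemma L_le_affine:
  assumes "i \<in> I"
  shows "L i n \<le> (\<Sum>j\<in>I. \<Sum>r\<le>T. L j r) + max_ratio T * D i n"
  using assms
proof (induction n arbitrary: i rule: less_induct)
  case (less n)
  let ?C = "\<Sum>j\<in>I. \<Sum>r\<le>T. L j r"
  show ?case
  proof (cases "n \<le> T")
    case True
    have "L i n \<le> (\<Sum>r\<le>T. L i r)"
      by (rule member_le_sum) (use True L_nonneg less.prems in auto)
    also have "\<dots> \<le> ?C"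
      by (rule member_le_sum[of i]) (use less.prems finite_I L_nonneg in \<open>auto intro: sum_nonneg\<close>)
    finally show ?thesis
      using mult_nonneg_nonneg[OF max_ratio_nonneg[of T] less_imp_le[OF D_pos[OF less.prems, of n]]] by linarith
  next
    case False
    then obtain m where n: "n = Suc m + T"
      using less_imp_Suc_add[of T n] by auto
    have "L i n \<le> L i m + (\<Sum>j\<in>I. A m i j * L j T)"
      unfolding n by (rule L_split[OF less.prems])
    also have "\<dots> \<le> (?C + max_ratio T * D i m) + (\<Sum>j\<in>I. A m i j * (max_ratio T * D j T))"
      using less.IH[of m i] less.prems n L_le_max_ratio A_nonneg
      by (intro add_mono sum_mono mult_left_mono) auto
    also have "\<dots> = ?C + max_ratio T * D i n"
      using D_split[OF less.prems, of m T] n by (simp add: sum_distrib_left algebra_simps)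
    finally show ?thesis .
  qed
qed

lemma eventually_ratio_less:
  assumes "entropy < a"
  shows "\<forall>\<^sub>F n in sequentially. \<forall>i\<in>I. ratio i n < a"
proof -
  obtain T where T: "max_ratio T < a"
    using assms bdd_below_max_ratio unfolding entropy_def by (auto simp: cINF_less_iff)
  define C where "C = (\<Sum>j\<in>I. \<Sum>r\<le>T. L j r)"
  have "\<forall>i\<in>I. \<forall>\<^sub>F n in sequentially. C / (a - max_ratio T) < D i n"
    using D_tendsto_at_top by (simp add: filterlim_at_top_dense)
  then have "\<forall>\<^sub>F n in sequentially. \<forall>i\<in>I. C / (a - max_ratio T) < D i n"
    by (rule eventually_ball_finite[OF finite_I])
  then show ?thesis
  proof (rule eventually_mono, intro ballI)
    fix n i assume big: "\<forall>i\<in>I. C / (a - max_ratio T) < D i n" and i: "i \<in> I"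
    then have "C < (a - max_ratio T) * D i n"
      using T by (simp add: pos_divide_less_eq mult.commute)
    then have "L i n < a * D i n"
      using L_le_affine[OF i, of n T] unfolding C_def by (simp add: algebra_simps)
    then show "ratio i n < a"
      using D_pos[OF i] by (simp add: ratio_def pos_divide_less_eq)
  qed
qed

lemma D_shift_le:
  assumes x: "x \<in> I" and B: "\<forall>y\<in>I. D y n \<le> B"
  shows "D x (Suc m + n) \<le> (\<Sum>y\<in>I. D y m) + (\<Sum>y\<in>I. \<Sum>z\<in>I. A m y z) * B"
proof -
  have "0 \<le> B"
    using B I_nonempty D_pos by (meson all_not_in_conv less_imp_le order_trans)
  have "D x m \<le> (\<Sum>y\<in>I. D y m)"
    by (rule member_le_sum) (use x finite_I D_pos in \<open>auto intro: less_imp_le\<close>)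
  moreover have "(\<Sum>z\<in>I. A m x z * D z n) \<le> (\<Sum>z\<in>I. A m x z) * B"
    unfolding sum_distrib_right using A_nonneg B x by (intro sum_mono mult_left_mono) auto
  moreover have "(\<Sum>z\<in>I. A m x z) * B \<le> (\<Sum>y\<in>I. \<Sum>z\<in>I. A m y z) * B"
    using x finite_I A_nonneg \<open>0 \<le> B\<close>
    by (intro mult_right_mono member_le_sum[of x I "\<lambda>y. \<Sum>z\<in>I. A m y z"]) (auto intro: sum_nonneg)
  ultimately show ?thesis
    using D_split[OF x, of m n] by linarith
qed

lemma D_comparable:
  assumes Am: "\<forall>i\<in>I. \<forall>j\<in>I. 1 \<le> A m i j" and i: "i \<in> I"
  shows "\<exists>C>0. \<forall>n\<ge>Suc m. \<forall>j\<in>I. D j (Suc m + n) \<le> C * D i n"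
proof -
  define c where "c = (\<Sum>y\<in>I. D y m)"
  define q where "q = (\<Sum>y\<in>I. \<Sum>z\<in>I. A m y z)"
  have "D i m \<le> c"
    unfolding c_def by (rule member_le_sum) (use i finite_I D_pos in \<open>auto intro: less_imp_le\<close>)
  then have c: "0 < c"
    using D_pos[OF i, of m] by linarith
  have q: "0 \<le> q"
    unfolding q_def using A_nonneg by (intro sum_nonneg) auto
  have lift: "D y n \<le> D i (Suc m + n)" if y: "y \<in> I" for y n
  proof -
    have "D y n \<le> A m i y * D y n"
      using Am i y D_pos[OF y, of n] by (simp add: mult_le_cancel_right1)
    also have "\<dots> \<le> (\<Sum>z\<in>I. A m i z * D z n)"
      using y finite_I by (intro member_le_sum) (auto intro!: mult_nonneg_nonneg A_nonneg less_imp_le[OF D_pos] i)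
    finally show ?thesis
      using D_split[OF i, of m n] D_pos[OF i, of m] by linarith
  qed
  have shift: "D x (Suc m + n) \<le> c + q * B" if "x \<in> I" "\<forall>y\<in>I. D y n \<le> B" for x n B
    unfolding c_def q_def by (rule D_shift_le[OF that])
  have comp: "D y n \<le> (c + q) * D i n" if y: "y \<in> I" and n: "Suc m \<le> n" for y n
  proof -
    obtain n' where n': "n = Suc m + n'"
      using le_Suc_ex[OF n] by blast
    have "D y n \<le> c + q * D i n"
      unfolding n' using y lift by (intro shift) auto
    also have "\<dots> \<le> (c + q) * D i n"
      using mult_left_mono[OF D_ge_1[OF i, of n], of c] c by (simp add: distrib_right)
    finally show ?thesis .
  qed
  have "D j (Suc m + n) \<le> (c + q * (c + q)) * D i n" if j: "j \<in> I" and n: "Suc m \<le> n" for j n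
  proof -
    have "D j (Suc m + n) \<le> c + q * ((c + q) * D i n)"
      using j comp n by (intro shift) auto
    also have "\<dots> \<le> (c + q * (c + q)) * D i n"
      using mult_left_mono[OF D_ge_1[OF i, of n], of c] c by (simp add: distrib_right mult.assoc)
    finally show ?thesis .
  qed
  moreover have "0 < c + q * (c + q)"
    using c q by (simp add: add_pos_nonneg)
  ultimately show ?thesis
    by blast
qed

lemma L_split_deficit:
  assumes j: "j \<in> I" and i: "i \<in> I" and Aji: "1 \<le> A m j i" and b: "0 \<le> b" and \<delta>: "0 \<le> \<delta>"
    and L_le: "\<forall>l\<in>I. L l n \<le> b * D l n" and L_i: "L i n \<le> b * D i n - \<delta>"
  shows "L j (Suc m + n) \<le> L j m + b * D j (Suc m + n) - \<delta>"
proof -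
  define f where "f l = b * D l n - (if l = i then \<delta> else 0)" for l
  have "(\<Sum>l\<in>I. A m j l * L l n) \<le> (\<Sum>l\<in>I. A m j l * f l)"
    using L_le L_i j A_nonneg by (intro sum_mono mult_left_mono) (auto simp: f_def)
  also have "\<dots> = b * (\<Sum>l\<in>I. A m j l * D l n) - A m j i * \<delta>"
    using i finite_I
    by (simp add: f_def right_diff_distrib sum_subtractf sum_distrib_left mult.left_commute
        if_distrib[of "(*) (A m j _)"] cong del: if_weak_cong)
  also have "\<dots> \<le> b * (D j (Suc m + n) - D j m) - \<delta>"
    using D_split[OF j, of m n] mult_right_mono[OF Aji \<delta>] by simp
  also have "\<dots> \<le> b * D j (Suc m + n) - \<delta>"
    using b D_pos[OF j, of m] by (simp add: right_diff_distrib)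
  finally show ?thesis
    using L_split[OF j, of m n] by linarith
qed

lemma max_ratio_less_entropy_after_deficit:
  assumes Am: "\<forall>i\<in>I. \<forall>j\<in>I. 1 \<le> A m i j" and i: "i \<in> I" and C: "0 < C" and \<epsilon>: "0 < \<epsilon>"
    and comparable: "\<forall>j\<in>I. D j (Suc m + n) \<le> C * D i n"
    and upper: "\<forall>l\<in>I. ratio l n < entropy + \<epsilon> / (4 * C)"
    and small: "(\<Sum>j\<in>I. L j m) < \<epsilon> / 4 * D i n"
    and deficit: "ratio i n \<le> entropy - \<epsilon>"
  shows "max_ratio (Suc m + n) < entropy"
proof -
  define \<eta> where "\<eta> = \<epsilon> / (4 * C)"
  have \<eta>: "0 < \<eta>" "\<eta> * C = \<epsilon> / 4"
    using C \<epsilon> by (simp_all add: \<eta>_def)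
  have "ratio j (Suc m + n) < entropy" if j: "j \<in> I" for j
  proof -
    let ?N = "Suc m + n"
    have "\<forall>l\<in>I. L l n \<le> (entropy + \<eta>) * D l n"
      using upper D_pos by (auto simp: \<eta>_def ratio_def pos_divide_less_eq less_imp_le)
    moreover have "L i n \<le> (entropy + \<eta>) * D i n - (\<epsilon> + \<eta>) * D i n"
    proof -
      have "L i n \<le> (entropy - \<epsilon>) * D i n"
        using deficit D_pos[OF i, of n] unfolding ratio_def by (simp only: pos_divide_le_eq)
      then show ?thesis
        by (simp add: algebra_simps)
    qed
    ultimately have "L j ?N \<le> L j m + (entropy + \<eta>) * D j ?N - (\<epsilon> + \<eta>) * D i n"
      using Am i j entropy_nonneg \<eta> \<epsilon> D_pos[OF i, of n] by (intro L_split_deficit) auto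
    moreover have "L j m < \<epsilon> / 4 * D i n"
      using small member_le_sum[OF j, of "\<lambda>j. L j m"] finite_I L_nonneg by fastforce
    moreover have "\<eta> * D j ?N \<le> \<epsilon> / 4 * D i n"
      using mult_left_mono[OF bspec[OF comparable j], of \<eta>] \<eta> by (simp add: mult.assoc[symmetric])
    moreover have "0 < \<epsilon> * D i n" "0 \<le> \<eta> * D i n"
      using \<epsilon> \<eta> D_pos[OF i, of n] by simp_all
    ultimately have "L j ?N < entropy * D j ?N"
      by (simp add: algebra_simps)
    then show ?thesis
      using D_pos[OF j] by (simp add: ratio_def pos_divide_less_eq)
  qed
  then show ?thesis
    unfolding max_ratio_def using finite_I I_nonempty by simp
qed

lemma eventually_ratio_greater:
  assumes i: "i \<in> I" and a: "a < entropy"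
  shows "\<forall>\<^sub>F n in sequentially. a < ratio i n"
proof -
  obtain m where Am: "\<forall>i\<in>I. \<forall>j\<in>I. 1 \<le> A m i j"
    using A_primitive by blast
  obtain C where C: "0 < C" "\<forall>n\<ge>Suc m. \<forall>j\<in>I. D j (Suc m + n) \<le> C * D i n"
    using D_comparable[OF Am i] by blast
  define \<epsilon> where "\<epsilon> = entropy - a"
  have \<epsilon>: "0 < \<epsilon>"
    using a by (simp add: \<epsilon>_def)
  have "\<forall>\<^sub>F n in sequentially. \<forall>l\<in>I. ratio l n < entropy + \<epsilon> / (4 * C)"
    using C \<epsilon> by (intro eventually_ratio_less) simp
  moreover have "\<forall>\<^sub>F n in sequentially. (\<Sum>j\<in>I. L j m) / (\<epsilon> / 4) < D i n"
    using D_tendsto_at_top[OF i] by (simp add: filterlim_at_top_dense)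
  moreover have "\<forall>\<^sub>F n in sequentially. Suc m \<le> n"
    by (rule eventually_ge_at_top)
  ultimately have "\<forall>\<^sub>F n in sequentially. \<not> ratio i n \<le> entropy - \<epsilon>"
  proof eventually_elim
    case (elim n)
    then have "(\<Sum>j\<in>I. L j m) < \<epsilon> / 4 * D i n"
      using \<epsilon> by (simp add: pos_divide_less_eq mult.commute)
    with elim show ?case
      using max_ratio_less_entropy_after_deficit[OF Am i C(1) \<epsilon>] C(2) entropy_le_max_ratio[of "Suc m + n"]
      by fastforce
  qed
  then show ?thesis
    by (rule eventually_mono) (simp add: \<epsilon>_def)
qed

theorem ratio_tendsto_entropy:
  assumes "i \<in> I"
  shows "(\<lambda>n. ratio i n) \<longlonglongrightarrow> entropy"
proof (rule order_tendstoI)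
  show "\<forall>\<^sub>F n in sequentially. a < ratio i n" if "a < entropy" for a
    using eventually_ratio_greater[OF assms that] .
  show "\<forall>\<^sub>F n in sequentially. ratio i n < a" if "entropy < a" for a
    using eventually_ratio_less[OF that] by (rule eventually_mono) (use assms in blast)
qed

end

section \<open>Entropy of tree shifts on semigroups\<close>

lemma ln_of_nat_nonneg: "0 \<le> ln (real (n :: nat))"
  by (cases n) auto

lemma ln_le_ln_add_sum_ln:
  fixes a b :: nat and c :: "'b \<Rightarrow> nat"
  assumes S: "finite S" and le: "a \<le> b * prod c S"
  shows "ln (real a) \<le> ln (real b) + (\<Sum>s\<in>S. ln (real (c s)))"
proof (cases "a = 0")
  case True
  then show ?thesis
    using ln_of_nat_nonneg by (simp add: sum_nonneg)
next
  case False
  with le have "0 < b * prod c S"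
    by linarith
  then have pos: "0 < b" "\<forall>s\<in>S. 0 < c s"
    using S by (auto simp: prod_zero_iff)
  have "ln (real a) \<le> ln (real b * (\<Prod>s\<in>S. real (c s)))"
    using False le by (intro ln_mono) (auto simp flip: of_nat_mult of_nat_prod)
  also have "\<dots> = ln (real b) + (\<Sum>s\<in>S. ln (real (c s)))"
    using pos S by (simp add: ln_mult_pos prod_pos ln_prod)
  finally show ?thesis .
qed

lemma cone_growth_accepted_patterns:
  fixes X :: "(nat list \<Rightarrow> 'a::finite) set"
  assumes K01: "\<forall>i<k. \<forall>j<k. K i j \<in> {0, 1}" and prim: "primitive k K" and k: "0 < k"
  shows "cone_growth {..<k} (\<lambda>m i j. real (matpow k K (Suc m) i j)) (\<lambda>i n. real (card (cone K k i n)))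
           (\<lambda>i n. ln (real (card (accepted_patterns K k X (cone K k i n)))))"
proof
  show "\<exists>m. \<forall>i\<in>{..<k}. \<forall>j\<in>{..<k}. 1 \<le> real (matpow k K (Suc m) i j)"
  proof -
    obtain m where "1 \<le> m" "\<forall>i<k. \<forall>j<k. 0 < matpow k K m i j"
      using prim unfolding primitive_def by blast
    then have "\<forall>i\<in>{..<k}. \<forall>j\<in>{..<k}. 1 \<le> real (matpow k K (Suc (m - 1)) i j)"
      by (simp add: Suc_le_eq)
    then show ?thesis ..
  qed
  show "1 \<le> real (card (cone K k i n))" if "i \<in> {..<k}" for i n
    using that singleton_in_cone[of i k K n] finite_cone
    by (simp add: Suc_le_eq card_gt_0_iff) blast
  fix i m n assume i: "i \<in> {..<k}"
  show "real (card (cone K k i (Suc m + n))) = real (card (cone K k i m))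
      + (\<Sum>j\<in>{..<k}. real (matpow k K (Suc m) i j) * real (card (cone K k j n)))"
    using card_cone_split[of K k i m n] sum_paths_last[OF K01, of i "\<lambda>j. real (card (cone K k j n))"] i
    by (simp del: matpow.simps)
  show "ln (real (card (accepted_patterns K k X (cone K k i (Suc m + n)))))
      \<le> ln (real (card (accepted_patterns K k X (cone K k i m))))
        + (\<Sum>j\<in>{..<k}. real (matpow k K (Suc m) i j) * ln (real (card (accepted_patterns K k X (cone K k j n)))))"
    using ln_le_ln_add_sum_ln[OF finite_paths
        card_accepted_patterns_cone_split[OF K01, where X = X and i = i and m = m and n = n]]
      sum_paths_last[OF K01, of i "\<lambda>j. ln (real (card (accepted_patterns K k X (cone K k j n))))" "Suc m"] i
    by (simp del: matpow.simps)
qed (use k ln_of_nat_nonneg in \<open>auto simp del: matpow.simps\<close>)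

theorem theorem3p6:
  fixes k :: nat and K :: "nat \<Rightarrow> nat \<Rightarrow> nat" and X :: "(nat list \<Rightarrow> 'a::finite) set"
  assumes "\<forall>i<k. \<forall>j<k. K i j \<in> {0, 1}"
    and "is_tree_shift K k X"
    and "primitive k K"
    and "i < k"
  shows "(\<lambda>n. ln (real (pcount K k X [i] n)) / real (card (semiball K k [i] n)))
           \<longlonglongrightarrow> (INF n. Max ((\<lambda>j. ln (real (pcount K k X [j] n)) / real (card (semiball K k [j] n))) ` {..<k}))"
proof -
  interpret cone_growth "{..<k}" "\<lambda>m i j. real (matpow k K (Suc m) i j)"
    "\<lambda>i n. real (card (cone K k i n))" "\<lambda>i n. ln (real (card (accepted_patterns K k X (cone K k i n))))"
    using cone_growth_accepted_patterns[OF assms(1,3)] assms(4) by simp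
  have ratio_eq: "ln (real (pcount K k X [j] n)) / real (card (semiball K k [j] n)) = ratio j n"
    if "j < k" for j n
    using that by (simp add: ratio_def pcount_eq_card_accepted_patterns semiball_singleton[OF assms(1)])
  have max_eq: "Max ((\<lambda>j. ln (real (pcount K k X [j] n)) / real (card (semiball K k [j] n))) ` {..<k})
      = max_ratio n" for n
    unfolding max_ratio_def by (rule arg_cong[where f = Max], rule image_cong) (simp_all add: ratio_eq)
  show ?thesis
    unfolding ratio_eq[OF assms(4)] max_eq entropy_def[symmetric]
    using assms(4) by (intro ratio_tendsto_entropy) simp
qed

end
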